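(* Consider any trajectory of the hybrid devil-stick model below, and suppose that for some $k$, $D\rho_k=0$ and $D\rho_{k+1}=0$. Then $$S_m\,\omega_{k+1}-S_p\,\omega_k=-K\sin\theta_k\left[\frac{1}{\omega_k}+\frac{1}{\omega_{k+1}}\right],$$ where $K=\frac{g(\Delta\theta^* )^2}{4R\sin(\Delta\theta^*/2)}$, $S_m=\sin(\phi-\Delta\theta^*/2)$, $S_p=\sin(\phi+\Delta\theta^*/2)$. In particular, if $\phi=\pi/2$ (resp. $\phi=-\pi/2$) this becomes $\omega_{k+1}-\omega_k=P\sin\theta_k\left[\frac1{\omega_k}+\frac1{\omega_{k+1}}\right]$ with $P=-\frac{g(\Delta\theta^* )^2}{2R\sin\Delta\theta^*}$ (resp. $P=\frac{g(\Delta\theta^* )^2}{2R\sin\Delta\theta^*}$).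
   Context: Constants: $m,J,g,R>0$, $\Delta\theta^*\in(0,\pi)$, $\phi\in(-\pi,\pi]$. The hybrid model consists of sequences $h(k),v(k)\in\mathbb{R}^2$, $\theta_k\in\mathbb{R}$, $\omega_k>0$, inputs $I_k,r_k\in\mathbb{R}$ and $\delta_k>0$ satisfying, for all $k\ge1$: $h(k+1)=h(k)+v(k)\delta_k+\begin{bmatrix}-\sin\theta_k\\ \cos\theta_k\end{bmatrix}\frac{I_k\delta_k}{m}+\begin{bmatrix}0\\-\tfrac12 g\delta_k^2\end{bmatrix}$, $v(k+1)=v(k)+\begin{bmatrix}-\sin\theta_k\\ \cos\theta_k\end{bmatrix}\frac{I_k}{m}+\begin{bmatrix}0\\-g\delta_k\end{bmatrix}$, $\theta_{k+1}=\theta_k+\Delta\theta^*$, $\omega_{k+1}=\omega_k+\frac{I_kr_k}{J}$, $\delta_k=\Delta\theta^*/\omega_{k+1}$. Define $\Phi(\theta)=\begin{bmatrix}R\cos(\theta-\phi)\\ R\sin(\theta-\phi)\end{bmatrix}$, $\Psi(\theta,\omega)=\frac{\omega}{\Delta\theta^*}[\Phi(\theta)-\Phi(\theta-\Delta\theta^* )]-\begin{bmatrix}0\\ \frac{g\Delta\theta^*}{2\omega}\end{bmatrix}$, $\rho_k=h(k)-\Phi(\theta_k)$ and $D\rho_k=v(k)-\Psi(\theta_k,\omega_k)$. *)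

theory Defs
  imports "HOL-Analysis.Analysis"
begin

definition Phi :: "real \<Rightarrow> real \<Rightarrow> real \<Rightarrow> real \<times> real" where
  "Phi R \<phi> \<theta> = (R * cos (\<theta> - \<phi>), R * sin (\<theta> - \<phi>))"

definition Psi :: "real \<Rightarrow> real \<Rightarrow> real \<Rightarrow> real \<Rightarrow> real \<Rightarrow> real \<Rightarrow> real \<times> real" where
  "Psi g R \<phi> d\<theta> \<theta> \<omega> =
     (\<omega> / d\<theta>) *\<^sub>R (Phi R \<phi> \<theta> - Phi R \<phi> (\<theta> - d\<theta>)) - (0, g * d\<theta> / (2 * \<omega>))"

definition devil_traj ::
  "real \<Rightarrow> real \<Rightarrow> real \<Rightarrow> real \<Rightarrow>
   (nat \<Rightarrow> real \<times> real) \<Rightarrow> (nat \<Rightarrow> real \<times> real) \<Rightarrow> (nat \<Rightarrow> real) \<Rightarrow> (nat \<Rightarrow> real) \<Rightarrow>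
   (nat \<Rightarrow> real) \<Rightarrow> (nat \<Rightarrow> real) \<Rightarrow> (nat \<Rightarrow> real) \<Rightarrow> bool" where
  "devil_traj m J g d\<theta> h v \<theta> \<omega> I r \<delta> \<longleftrightarrow>
     (\<forall>k\<ge>1.
        \<omega> k > 0 \<and> \<delta> k > 0 \<and>
        h (k+1) = h k + \<delta> k *\<^sub>R v k + (I k * \<delta> k / m) *\<^sub>R (- sin (\<theta> k), cos (\<theta> k))
                  + (0, - (1/2) * g * (\<delta> k)\<^sup>2) \<and>
        v (k+1) = v k + (I k / m) *\<^sub>R (- sin (\<theta> k), cos (\<theta> k)) + (0, - g * \<delta> k) \<and>
        \<theta> (k+1) = \<theta> k + d\<theta> \<and>
        \<omega> (k+1) = \<omega> k + I k * r k / J \<and>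
        \<delta> k = d\<theta> / \<omega> (k+1))"

end

theory Submission
  imports Defs
begin

text \<open>The impulse acts along \<open>(- sin \<theta>\<^sub>k, cos \<theta>\<^sub>k)\<close>, so projecting the velocity update
  onto the orthogonal radial direction \<open>(cos \<theta>\<^sub>k, sin \<theta>\<^sub>k)\<close> eliminates the unknown impulse:
  only gravity, acting for the time \<open>\<Delta>\<theta>\<^sup>* / \<omega>(k+1)\<close>, changes the radial velocity.  If \<open>v\<close>
  agrees with \<open>\<Psi>\<close> at steps \<open>k\<close> and \<open>k + 1\<close>, both radial velocities are explicit trigonometric
  expressions in \<open>\<omega>(k)\<close> resp. \<open>\<omega>(k+1)\<close>, and equating them gives the relation.  For
  \<open>\<phi> = \<plusminus>\<pi>/2\<close> both sines in it equal \<open>\<plusminus>cos(\<Delta>\<theta>\<^sup>*/2)\<close>, which cancels against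
  \<open>sin \<Delta>\<theta>\<^sup>* = 2 sin(\<Delta>\<theta>\<^sup>*/2) cos(\<Delta>\<theta>\<^sup>*/2)\<close>.\<close>

lemma inner_Phi: "(cos t, sin t) \<bullet> Phi R \<phi> s = R * cos (s - \<phi> - t)"
  using cos_diff[of "s - \<phi>" t] by (simp add: Phi_def algebra_simps)

lemma inner_Psi:
  "(cos t, sin t) \<bullet> Psi g R \<phi> d (t + c) \<omega>
     = (2 * \<omega> * R * sin (d/2) / d) * sin (\<phi> + d/2 - c) - g * d * sin t / (2 * \<omega>)"
proof -
  have "cos (c - \<phi>) - cos (c - d - \<phi>) = 2 * sin (d/2) * sin (\<phi> + d/2 - c)"
  proof -
    have "(c - \<phi> + (c - d - \<phi>)) / 2 = - (\<phi> + d/2 - c)" "(c - d - \<phi> - (c - \<phi>)) / 2 = - (d/2)"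
      by simp_all
    then show ?thesis
      using cos_diff_cos[of "c - \<phi>" "c - d - \<phi>"] by (simp only: sin_minus) simp
  qed
  then show ?thesis
    by (simp add: Psi_def inner_diff_right inner_Phi algebra_simps)
qed

lemma devil_traj_radial_velocity_step:
  assumes "devil_traj m J g d\<theta> h v \<theta> \<omega> I r \<delta>" "k \<ge> 1"
  shows "(cos (\<theta> k), sin (\<theta> k)) \<bullet> v (k+1)
           = (cos (\<theta> k), sin (\<theta> k)) \<bullet> v k - g * \<delta> k * sin (\<theta> k)"
  using assms unfolding devil_traj_def by (auto simp: inner_add_right algebra_simps)

lemma devil_traj_omega_relation:
  assumes "R > 0" "0 < d\<theta>" "d\<theta> < pi"
    and traj: "devil_traj m J g d\<theta> h v \<theta> \<omega> I r \<delta>" and "k \<ge> 1"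
    and v_k: "v k = Psi g R \<phi> d\<theta> (\<theta> k) (\<omega> k)"
    and v_Suc_k: "v (k+1) = Psi g R \<phi> d\<theta> (\<theta> (k+1)) (\<omega> (k+1))"
  shows "sin (\<phi> - d\<theta>/2) * \<omega> (k+1) - sin (\<phi> + d\<theta>/2) * \<omega> k
           = - (g * d\<theta>\<^sup>2 / (4 * R * sin (d\<theta>/2))) * sin (\<theta> k) * (1 / \<omega> k + 1 / \<omega> (k+1))"
proof -
  define A where "A = 2 * R * sin (d\<theta>/2) / d\<theta>"
  have "sin (d\<theta>/2) > 0"
    using assms(2,3) by (intro sin_gt_zero) auto
  then have "A > 0"
    using assms(1,2) by (simp add: A_def)
  have dynamics: "\<omega> k > 0 \<and> \<omega> (k+1) > 0 \<and> \<theta> (k+1) = \<theta> k + d\<theta> \<and> \<delta> k = d\<theta> / \<omega> (k+1)"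
    using traj[unfolded devil_traj_def, rule_format, of k] traj[unfolded devil_traj_def, rule_format, of "k+1"]
      \<open>k \<ge> 1\<close> by simp
  have "A * \<omega> (k+1) * sin (\<phi> - d\<theta>/2) - g * d\<theta> * sin (\<theta> k) / (2 * \<omega> (k+1))
      = A * \<omega> k * sin (\<phi> + d\<theta>/2) - g * d\<theta> * sin (\<theta> k) / (2 * \<omega> k)
        - g * (d\<theta> / \<omega> (k+1)) * sin (\<theta> k)"
    using devil_traj_radial_velocity_step[OF traj \<open>k \<ge> 1\<close>] v_k v_Suc_k dynamics
      inner_Psi[of "\<theta> k" g R \<phi> d\<theta> d\<theta>] inner_Psi[of "\<theta> k" g R \<phi> d\<theta> 0]
    by (simp add: A_def mult_ac)
  then have "A * (sin (\<phi> - d\<theta>/2) * \<omega> (k+1) - sin (\<phi> + d\<theta>/2) * \<omega> k)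
      = - (g * d\<theta> / 2) * sin (\<theta> k) * (1 / \<omega> k + 1 / \<omega> (k+1))"
    using dynamics by (simp add: field_simps)
  then show ?thesis
    using \<open>A > 0\<close> \<open>sin (d\<theta>/2) > 0\<close> assms(1,2)
    by (simp add: A_def field_simps power2_eq_square)
qed

lemma half_angle_coefficient:
  fixes c R d :: real
  assumes "sin d \<noteq> 0"
  shows "c / (4 * R * sin (d/2)) = cos (d/2) * (c / (2 * R * sin d))"
proof -
  have "sin d = 2 * sin (d/2) * cos (d/2)"
    using sin_double[of "d/2"] by simp
  with assms show ?thesis
    by (auto simp: field_simps)
qed

lemma omega_relation_vertical:
  fixes \<phi> d c R w0 w1 s y :: real
  assumes rel: "sin (\<phi> - d/2) * w1 - sin (\<phi> + d/2) * w0 = - (c / (4 * R * sin (d/2))) * s * y"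
    and "0 < d" "d < pi"
  shows "\<phi> = pi/2 \<Longrightarrow> w1 - w0 = - (c / (2 * R * sin d)) * s * y"
    and "\<phi> = -pi/2 \<Longrightarrow> w1 - w0 = (c / (2 * R * sin d)) * s * y"
proof -
  have "cos (d/2) > 0"
    using assms(2,3) by (intro cos_gt_zero) auto
  have coeff: "c / (4 * R * sin (d/2)) = cos (d/2) * (c / (2 * R * sin d))"
    using assms(2,3) by (intro half_angle_coefficient) (simp add: sin_gt_zero less_imp_neq[symmetric])
  show "w1 - w0 = - (c / (2 * R * sin d)) * s * y" if "\<phi> = pi/2"
  proof -
    have "cos (d/2) * (w1 - w0) = cos (d/2) * (- (c / (2 * R * sin d)) * s * y)"
      using rel unfolding coeff \<open>\<phi> = pi/2\<close> by (simp add: sin_diff sin_add algebra_simps)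
    with \<open>cos (d/2) > 0\<close> show ?thesis
      by (metis mult_cancel_left neg_equal_0_iff_equal order_less_irrefl)
  qed
  show "w1 - w0 = (c / (2 * R * sin d)) * s * y" if "\<phi> = -pi/2"
  proof -
    have "- cos (d/2) * (w1 - w0) = - cos (d/2) * ((c / (2 * R * sin d)) * s * y)"
      using rel unfolding coeff \<open>\<phi> = -pi/2\<close> by (simp add: sin_diff sin_add algebra_simps)
    with \<open>cos (d/2) > 0\<close> show ?thesis
      by (metis mult_cancel_left neg_equal_0_iff_equal order_less_irrefl)
  qed
qed

theorem mainTheorem6:
  fixes m J g R d\<theta> \<phi> :: real
    and h v :: "nat \<Rightarrow> real \<times> real"
    and \<theta> \<omega> I r \<delta> :: "nat \<Rightarrow> real"
    and k :: nat
  assumes "m > 0" "J > 0" "g > 0" "R > 0"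
    and "0 < d\<theta>" "d\<theta> < pi"
    and "-pi < \<phi>" "\<phi> \<le> pi"
    and "devil_traj m J g d\<theta> h v \<theta> \<omega> I r \<delta>"
    and "k \<ge> 1"
    and "v k - Psi g R \<phi> d\<theta> (\<theta> k) (\<omega> k) = 0"
    and "v (k+1) - Psi g R \<phi> d\<theta> (\<theta> (k+1)) (\<omega> (k+1)) = 0"
  shows "sin (\<phi> - d\<theta>/2) * \<omega> (k+1) - sin (\<phi> + d\<theta>/2) * \<omega> k
           = - (g * d\<theta>\<^sup>2 / (4 * R * sin (d\<theta>/2))) * sin (\<theta> k) * (1 / \<omega> k + 1 / \<omega> (k+1))
         \<and> (\<phi> = pi/2 \<longrightarrow> \<omega> (k+1) - \<omega> k
           = (- (g * d\<theta>\<^sup>2 / (2 * R * sin d\<theta>))) * sin (\<theta> k) * (1 / \<omega> k + 1 / \<omega> (k+1)))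
         \<and> (\<phi> = -pi/2 \<longrightarrow> \<omega> (k+1) - \<omega> k
           = (g * d\<theta>\<^sup>2 / (2 * R * sin d\<theta>)) * sin (\<theta> k) * (1 / \<omega> k + 1 / \<omega> (k+1)))"
proof -
  have rel: "sin (\<phi> - d\<theta>/2) * \<omega> (k+1) - sin (\<phi> + d\<theta>/2) * \<omega> k
      = - (g * d\<theta>\<^sup>2 / (4 * R * sin (d\<theta>/2))) * sin (\<theta> k) * (1 / \<omega> k + 1 / \<omega> (k+1))"
    using assms(11,12) by (intro devil_traj_omega_relation[OF assms(4,5,6,9,10)]) simp_all
  show ?thesis
    using rel omega_relation_vertical[OF rel assms(5,6)] by simp
qed

end
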